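(* Let $n\ge 2$, $a\ge\sqrt{n-1}$, $f(x)=a|x^{(1)}|+\sum_{i=2}^n x^{(i)}$ on $\mathbb{R}^n$, and $0<c_1<c_2<1$. Let $x_0\in\mathbb{R}^n$ with $x_0^{(1)}\ne0$ and define $x_{k+1}=x_k+t_kd_k$ with $d_k=-\nabla f(x_k)$, where $A(t_k)$ and $W(t_k)$ hold for all $k\ge0$. Let $\tau=c_1+\frac{(n-1)(c_1-1)}{a^2}$. If $\tau>0$, then $f(x_k)$ is bounded below as $k\to\infty$.
   Context: $x^{(i)}$ is the $i$-th coordinate. At iteration $k$, the Armijo condition is $A(t)$: $f(x_k+td_k)\le f(x_k)+c_1t\nabla f(x_k)^Td_k$; the Wolfe condition is $W(t)$: $f$ is differentiable at $x_k+td_k$ and $\nabla f(x_k+td_k)^Td_k\ge c_2\nabla f(x_k)^Td_k$. *)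

theory Defs
  imports "HOL-Analysis.Analysis"
begin

definition grad :: "('a::real_inner \<Rightarrow> real) \<Rightarrow> 'a \<Rightarrow> 'a" where
  "grad f x = (THE D. GDERIV f x :> D)"

definition fcor :: "real \<Rightarrow> 'n::finite \<Rightarrow> real ^ 'n \<Rightarrow> real" where
  "fcor a i1 x = a * \<bar>x $ i1\<bar> + (\<Sum>i\<in>UNIV - {i1}. x $ i)"

end

theory Submission imports Defs begin

text \<open>On each open half-space where the first coordinate has a fixed sign \<open>s\<close>, \<open>f\<close> is
  linear with gradient \<open>g\<^sub>s = (a s, 1, \<dots>, 1)\<close>. The Wolfe condition rules out the kink
  of \<open>f\<close> and, since \<open>c\<^sub>2 < 1\<close>, forbids two consecutive iterates on the same side, so the
  sign of the first coordinate alternates. The iteration then reduces to a scalar recurrence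
  for \<open>u\<^sub>k\<close>, the absolute value of the first coordinate of \<open>x\<^sub>k\<close>, and \<open>F\<^sub>k = f(x\<^sub>k)\<close>; for
  \<open>\<tau> > 0\<close> the combination \<open>D F\<^sub>k - a (a\<^sup>2 + D) u\<^sub>k\<close> with \<open>D = a\<^sup>2 \<tau>\<close> is nondecreasing,
  which bounds \<open>F\<^sub>k\<close> from below.\<close>

lemma grad_eqI:
  fixes f :: "'a::real_inner \<Rightarrow> real"
  assumes "GDERIV f x :> D"
  shows "grad f x = D"
  unfolding grad_def
proof (rule the_equality[where P = "\<lambda>D. GDERIV f x :> D", OF assms])
  fix D' assume "GDERIV f x :> D'"
  then have "(\<lambda>h. h \<bullet> D') = (\<lambda>h. h \<bullet> D)"
    using has_derivative_unique assms by (auto simp: gderiv_def)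
  then have "\<And>h. h \<bullet> (D' - D) = 0" by (metis inner_diff_right right_minus_eq)
  then show "D' = D" by (metis inner_eq_zero_iff right_minus_eq)
qed

definition fcor_piece_grad :: "real \<Rightarrow> 'n::finite \<Rightarrow> real \<Rightarrow> real ^ 'n" where
  "fcor_piece_grad a i1 s = (\<chi> i. if i = i1 then a * s else 1)"

lemma inner_fcor_piece_grad:
  "fcor_piece_grad a i1 s \<bullet> y = a * s * y $ i1 + (\<Sum>i\<in>UNIV - {i1}. y $ i)"
proof -
  have "fcor_piece_grad a i1 s \<bullet> y = (\<Sum>i\<in>UNIV. fcor_piece_grad a i1 s $ i * y $ i)"
    by (simp add: inner_vec_def)
  also have "\<dots> = a * s * y $ i1 + (\<Sum>i\<in>UNIV - {i1}. fcor_piece_grad a i1 s $ i * y $ i)"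
    by (subst sum.remove[of _ i1]) (auto simp: fcor_piece_grad_def)
  also have "(\<Sum>i\<in>UNIV - {i1}. fcor_piece_grad a i1 s $ i * y $ i) = (\<Sum>i\<in>UNIV - {i1}. y $ i)"
    by (rule sum.cong) (auto simp: fcor_piece_grad_def)
  finally show ?thesis .
qed

lemma inner_fcor_piece_grads:
  fixes i1 :: "'n::finite"
  shows "fcor_piece_grad a i1 s \<bullet> fcor_piece_grad a i1 s' = a\<^sup>2 * s * s' + (real CARD('n) - 1)"
proof -
  have "(\<Sum>i\<in>UNIV - {i1}. fcor_piece_grad a i1 s' $ i) = (\<Sum>i\<in>UNIV - {i1}. 1)"
    by (rule sum.cong) (auto simp: fcor_piece_grad_def)
  then show ?thesis
    unfolding inner_fcor_piece_grad[of a i1 s]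
    by (simp add: fcor_piece_grad_def card_Diff_singleton power2_eq_square)
qed

lemma fcor_eq_inner_piece_grad: "fcor a i1 y = fcor_piece_grad a i1 (sgn (y $ i1)) \<bullet> y"
  by (cases "y $ i1" "0::real" rule: linorder_cases) (auto simp: inner_fcor_piece_grad fcor_def)

lemma grad_fcor:
  fixes x :: "real ^ 'n::finite"
  assumes "x $ i1 \<noteq> 0"
  shows "grad (fcor a i1) x = fcor_piece_grad a i1 (sgn (x $ i1))"
proof (rule grad_eqI)
  let ?g = "fcor_piece_grad a i1 (sgn (x $ i1))"
  have lin: "((\<lambda>y. ?g \<bullet> y) has_derivative (\<lambda>h. h \<bullet> ?g)) (at x)"
    by (auto intro!: derivative_eq_intros simp: inner_commute)
  have "(fcor a i1 has_derivative (\<lambda>h. h \<bullet> ?g)) (at x)"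
  proof (rule has_derivative_transform_within[OF lin, of "\<bar>x $ i1\<bar>"])
    fix y assume "dist y x < \<bar>x $ i1\<bar>"
    moreover have "\<bar>y $ i1 - x $ i1\<bar> \<le> dist y x"
      using component_le_norm_cart[of "y - x" i1] by (simp add: dist_norm)
    ultimately have "sgn (y $ i1) = sgn (x $ i1)" by (auto simp: sgn_if)
    then show "?g \<bullet> y = fcor a i1 y" by (simp add: fcor_eq_inner_piece_grad)
  qed (use assms in auto)
  then show "GDERIV (fcor a i1) x :> ?g" by (simp add: gderiv_def)
qed

lemma inner_grad_fcor_self:
  fixes x :: "real ^ 'n::finite"
  assumes "x $ i1 \<noteq> 0"
  shows "grad (fcor a i1) x \<bullet> grad (fcor a i1) x = a\<^sup>2 + (real CARD('n) - 1)"
  using assms by (simp add: grad_fcor inner_fcor_piece_grads sgn_if)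

lemma fcor_differentiable_imp_nonzero:
  fixes x :: "real ^ 'n::finite"
  assumes "fcor a i1 differentiable (at x)" and "a > 0"
  shows "x $ i1 \<noteq> 0"
proof
  assume x0: "x $ i1 = 0"
  let ?C = "\<Sum>i\<in>UNIV - {i1}. x $ i"
  have "(\<lambda>s. x + s *\<^sub>R axis i1 1) differentiable (at 0)"
    by (intro derivative_intros)
  then have "(fcor a i1 \<circ> (\<lambda>s. x + s *\<^sub>R axis i1 1)) differentiable (at 0)"
    using differentiable_chain_at assms(1) by fastforce
  moreover have "fcor a i1 \<circ> (\<lambda>s. x + s *\<^sub>R axis i1 1) = (\<lambda>s. a * \<bar>s\<bar> + ?C)"
    using x0 by (auto simp: fcor_def axis_def intro!: sum.cong)
  ultimately obtain D where D: "((\<lambda>s. a * \<bar>s\<bar> + ?C) has_real_derivative D) (at 0)"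
    by (auto simp: real_differentiable_def)
  have "D = 0"
    using D by (rule DERIV_local_min[of _ _ _ 1]) (use assms(2) in auto)
  moreover have "D - a * 1 = 0"
    using DERIV_diff[OF D DERIV_cmult[OF DERIV_ident]]
  proof (rule DERIV_local_min[of _ _ _ 1])
    show "\<forall>y. \<bar>0 - y\<bar> < 1 \<longrightarrow> a * \<bar>0\<bar> + ?C - a * 0 \<le> a * \<bar>y\<bar> + ?C - a * y"
      using assms(2) by (auto simp: abs_if)
  qed auto
  ultimately show False
    using assms(2) by simp
qed

text \<open>If \<open>x\<close> and \<open>y\<close> lay on the same side, the Wolfe inequality would read
  \<open>-|g|\<^sup>2 \<ge> -c\<^sub>2 |g|\<^sup>2\<close>.\<close>

lemma wolfe_flips_sign:
  fixes x y :: "real ^ 'n::finite"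
  assumes "x $ i1 \<noteq> 0" "y $ i1 \<noteq> 0" "a \<noteq> 0" "c2 < 1"
    and "d = - grad (fcor a i1) x"
    and "grad (fcor a i1) y \<bullet> d \<ge> c2 * (grad (fcor a i1) x \<bullet> d)"
  shows "sgn (y $ i1) = - sgn (x $ i1)"
proof (rule ccontr)
  let ?q = "a\<^sup>2 + (real CARD('n) - 1)"
  assume "sgn (y $ i1) \<noteq> - sgn (x $ i1)"
  with assms(1,2) have "sgn (y $ i1) = sgn (x $ i1)" by (auto simp: sgn_if split: if_splits)
  then have "grad (fcor a i1) y = grad (fcor a i1) x"
    using assms(1,2) by (simp add: grad_fcor)
  then have "- ?q \<ge> c2 * - ?q"
    using assms(6) by (simp add: assms(5) inner_grad_fcor_self[OF assms(1)])
  moreover have "?q > 0"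
    using assms(3) by (simp add: add_pos_nonneg)
  ultimately show False
    using assms(4) by (simp add: mult_le_cancel_right1)
qed

lemma fcor_step_across_kink:
  fixes x y :: "real ^ 'n::finite"
  assumes "x $ i1 \<noteq> 0" "sgn (y $ i1) = - sgn (x $ i1)"
    and "y = x - t *\<^sub>R fcor_piece_grad a i1 (sgn (x $ i1))"
  shows "\<bar>y $ i1\<bar> = t * a - \<bar>x $ i1\<bar>"
    and "fcor a i1 y = fcor a i1 x - 2 * a * \<bar>x $ i1\<bar> + t * (a\<^sup>2 - (real CARD('n) - 1))"
proof -
  have s2: "sgn (x $ i1) * sgn (x $ i1) = 1"
    using assms(1) by (simp add: sgn_if)
  have "\<bar>y $ i1\<bar> = - sgn (x $ i1) * y $ i1"
    by (simp add: abs_sgn mult.commute flip: assms(2))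
  also have "\<dots> = t * a - \<bar>x $ i1\<bar>"
    using s2 by (simp add: assms(2,3) fcor_piece_grad_def abs_sgn algebra_simps)
  finally show "\<bar>y $ i1\<bar> = t * a - \<bar>x $ i1\<bar>" .
  have "fcor a i1 y = fcor_piece_grad a i1 (- sgn (x $ i1)) \<bullet> y"
    using assms(2) by (simp add: fcor_eq_inner_piece_grad)
  also have "\<dots> = fcor_piece_grad a i1 (- sgn (x $ i1)) \<bullet> x + t * (a\<^sup>2 - (real CARD('n) - 1))"
    using s2 by (simp add: assms(3) inner_diff_right inner_fcor_piece_grads mult.assoc algebra_simps)
  also have "fcor_piece_grad a i1 (- sgn (x $ i1)) \<bullet> x = fcor a i1 x - 2 * a * \<bar>x $ i1\<bar>"
    by (simp add: inner_fcor_piece_grad fcor_def abs_sgn mult.commute)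
  finally show "fcor a i1 y = fcor a i1 x - 2 * a * \<bar>x $ i1\<bar> + t * (a\<^sup>2 - (real CARD('n) - 1))" .
qed

lemma alternating_recurrence_bounded_below:
  fixes u F t :: "nat \<Rightarrow> real" and a m c1 :: real
  assumes u_Suc: "\<And>k. u (Suc k) = t k * a - u k" and u_pos: "\<And>k. u k > 0"
    and F_Suc: "\<And>k. F (Suc k) = F k - 2 * a * u k + t k * (a\<^sup>2 - m)"
    and F_decrease: "\<And>k. F (Suc k) \<le> F k - c1 * t k * (a\<^sup>2 + m)"
    and "a > 0" "m \<le> a\<^sup>2" and D_pos: "a\<^sup>2 * c1 + m * (c1 - 1) > 0"
  shows "\<exists>B. \<forall>k. B \<le> F k"
proof -
  define D where "D = a\<^sup>2 * c1 + m * (c1 - 1)"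
  define \<beta> where "\<beta> = a\<^sup>2 + D"
  define P where "P k = D * F k - a * \<beta> * u k" for k
  have "D > 0" using D_pos by (simp add: D_def)
  have P_mono: "P k \<le> P (Suc k)" for k
  proof -
    have t_bound: "t k * \<beta> \<le> 2 * a * u k"
      using F_Suc[of k] F_decrease[of k] by (simp add: \<beta>_def D_def algebra_simps)
    have "t k * a > 0" using u_Suc[of k] u_pos[of k] u_pos[of "Suc k"] by linarith
    then have "t k * (a\<^sup>2 - m) \<ge> 0" using \<open>a > 0\<close> \<open>m \<le> a\<^sup>2\<close> by (simp add: zero_less_mult_iff)
    then have F_part: "D * (F (Suc k) - F k) \<ge> D * (- 2 * a * u k)"
      using F_Suc[of k] \<open>D > 0\<close> by (intro mult_left_mono) auto
    have "a\<^sup>2 * (t k * \<beta>) \<le> a\<^sup>2 * (2 * a * u k)"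
      using t_bound by (intro mult_left_mono) auto
    then have u_part: "a * \<beta> * (u k - u (Suc k)) \<ge> 2 * a * u k * D"
      by (simp add: u_Suc \<beta>_def algebra_simps power2_eq_square)
    show ?thesis using F_part u_part by (simp add: P_def algebra_simps)
  qed
  have "P 0 / D \<le> F k" for k
  proof -
    have "P 0 \<le> P k" by (induction k) (auto intro: order_trans P_mono)
    moreover have "a * \<beta> * u k \<ge> 0" using \<open>a > 0\<close> u_pos[of k] \<open>D > 0\<close> by (simp add: \<beta>_def)
    ultimately have "P 0 \<le> D * F k" by (simp add: P_def)
    then show ?thesis using \<open>D > 0\<close> by (simp add: pos_divide_le_eq mult.commute)
  qed
  then show ?thesis by blast
qed

theorem corollary1:
  fixes a c1 c2 :: real and i1 :: "'n::finite"
    and x d :: "nat \<Rightarrow> real ^ 'n" and t :: "nat \<Rightarrow> real"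
  assumes n2: "CARD('n) \<ge> 2"
    and a_ge: "a \<ge> sqrt (real CARD('n) - 1)"
    and c1: "0 < c1" and c12: "c1 < c2" and c2: "c2 < 1"
    and x0: "x 0 $ i1 \<noteq> 0"
    and dk: "\<And>k. d k = - grad (fcor a i1) (x k)"
    and xk: "\<And>k. x (Suc k) = x k + t k *\<^sub>R d k"
    and armijo: "\<And>k. fcor a i1 (x k + t k *\<^sub>R d k)
                   \<le> fcor a i1 (x k) + c1 * t k * (grad (fcor a i1) (x k) \<bullet> d k)"
    and wolfe: "\<And>k. fcor a i1 differentiable (at (x k + t k *\<^sub>R d k)) \<and>
                   grad (fcor a i1) (x k + t k *\<^sub>R d k) \<bullet> d k
                   \<ge> c2 * (grad (fcor a i1) (x k) \<bullet> d k)"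
    and tau: "c1 + (real CARD('n) - 1) * (c1 - 1) / a\<^sup>2 > 0"
  shows "\<exists>B. \<forall>k. B \<le> fcor a i1 (x k)"
proof -
  let ?m = "real CARD('n) - 1"
  have "1 \<le> sqrt ?m" using n2 by simp
  then have "a > 0" using a_ge by linarith
  have "?m \<le> a\<^sup>2" using a_ge by (rule sqrt_le_D)
  have D_pos: "a\<^sup>2 * c1 + ?m * (c1 - 1) > 0"
    using tau \<open>a > 0\<close> by (simp add: field_simps)
  have nonzero: "x k $ i1 \<noteq> 0" for k
  proof (cases k)
    case (Suc j)
    then have "fcor a i1 differentiable (at (x k))"
      using wolfe[of j] by (simp flip: xk)
    then show ?thesis using fcor_differentiable_imp_nonzero \<open>a > 0\<close> by blast
  qed (use x0 in simp)
  have step: "x (Suc k) = x k - t k *\<^sub>R fcor_piece_grad a i1 (sgn (x k $ i1))" for k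
    using xk[of k] dk[of k] grad_fcor[OF nonzero] by simp
  have flip: "sgn (x (Suc k) $ i1) = - sgn (x k $ i1)" for k
    using wolfe_flips_sign[OF nonzero nonzero _ c2 dk] wolfe[of k] \<open>a > 0\<close> by (simp flip: xk)
  note across = fcor_step_across_kink[OF nonzero flip step]
  have decrease: "fcor a i1 (x (Suc k)) \<le> fcor a i1 (x k) - c1 * t k * (a\<^sup>2 + ?m)" for k
  proof -
    have "grad (fcor a i1) (x k) \<bullet> d k = - (a\<^sup>2 + ?m)"
      by (simp add: dk inner_grad_fcor_self[OF nonzero])
    with armijo[of k] show ?thesis by (simp add: algebra_simps flip: xk)
  qed
  show ?thesis
    by (rule alternating_recurrence_bounded_below[where u = "\<lambda>k. \<bar>x k $ i1\<bar>"])
      (use across decrease nonzero \<open>a > 0\<close> \<open>?m \<le> a\<^sup>2\<close> D_pos in auto)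
qed

end
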